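(* Let $\Phi=\exp(\phi)\in KV_3$ satisfy the pentagon equation $\Phi^{12,3,4}\Phi^{1,2,34}=\Phi^{1,2,3}\Phi^{1,23,4}\Phi^{2,3,4}$, the inversion property $\Phi^{1,2,3}\Phi^{3,2,1}=e$, and the hexagon equations $\exp((t^{1,3}+t^{2,3})/2)=\Phi^{2,1,3}\exp(t^{1,3}/2)(\Phi^{2,3,1})^{-1}\exp(t^{2,3}/2)\Phi^{3,2,1}$ and $\exp((t^{1,2}+t^{1,3})/2)=(\Phi^{1,3,2})^{-1}\exp(t^{1,3}/2)\Phi^{3,1,2}\exp(t^{1,2}/2)(\Phi^{3,2,1})^{-1}$. Then $\pi(\phi_2)=1/8$.
   Context: $k$ is a field of characteristic zero; $\mathfrak{lie}_n$, $\mathrm{Ass}_n$ are the degree completions of the free Lie and free associative algebras over $k$ on $x_1,\dots,x_n$ (written $x,y,z$; $x,y,z,w$), graded by word length. $a=a_0+\sum_k(\partial_ka)x_k$; $\mathfrak{tr}_n=\mathrm{Ass}_n^+/\langle ab-ba\rangle$ with projection $\mathrm{Tr}$. $\mathfrak{tder}_n$: derivations with $u(x_i)=[x_i,a_i]$, written $(a_1,\dots,a_n)$ ($a_i$ with zero coefficient of $x_i$ in degree one); $\mathfrak{sder}_n$: those with $u(\sum x_i)=0$; $\mathrm{div}(u)=\sum_k\mathrm{Tr}(x_k\partial_ka_k)$; $\mathfrak{kv}_n=\{u\in\mathfrak{sder}_n:\mathrm{div}\,u=0\}$; $KV_n=\exp(\mathfrak{kv}_n)$, $e$ the identity. In $\mathfrak{tder}_3$: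 $t^{1,2}=(y,x,0)$, $t^{1,3}=(z,0,x)$, $t^{2,3}=(0,z,y)$. For $u=(a_1,a_2,a_3)\in\mathfrak{tder}_3$ and a permutation $(i_1,i_2,i_3)$ of $(1,2,3)$, $u^{i_1,i_2,i_3}$ sends $x_{i_k}\mapsto[x_{i_k},a_k(x_{i_1},x_{i_2},x_{i_3})]$ ($x_1=x,x_2=y,x_3=z$). In $\mathfrak{tder}_4$: $u^{1,2,3}=(a_1,a_2,a_3,0)$, $u^{2,3,4}=(0,a_1,a_2,a_3)(y,z,w)$, $u^{12,3,4}=(a_1,a_1,a_2,a_3)(x+y,z,w)$, $u^{1,23,4}=(a_1,a_2,a_2,a_3)(x,y+z,w)$, $u^{1,2,34}=(a_1,a_2,a_3,a_3)(x,y,z+w)$. For group elements $\exp(u)^{\dots}=\exp(u^{\dots})$. For $\Phi=\exp(\phi)$ satisfying the pentagon equation, the degree-two component $\phi_2$ of $\phi$ has the form $(\alpha[y,z],\beta[z,x],\gamma[x,y])$ with $\alpha,\beta,\gamma\in k$, and $\pi(\phi_2):=\alpha+\beta+\gamma$. *)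

theory Defs
  imports Main
begin

text \<open>Completed free associative algebra over a field 'k (char 0) on letters
  x_0, x_1, x_2, ... (paper's x_1=x, x_2=y, x_3=z, x_4=w are letters 0,1,2,3 here):
  a series is the function assigning to each word its coefficient.\<close>

type_synonym 'k ser = "nat list \<Rightarrow> 'k"

definition zser :: "'k::field_char_0 ser" where
  "zser = (\<lambda>w. 0)"

definition X :: "nat \<Rightarrow> 'k::field_char_0 ser" where
  "X i = (\<lambda>w. if w = [i] then 1 else 0)"

definition smult :: "'k::field_char_0 ser \<Rightarrow> 'k ser \<Rightarrow> 'k ser" where
  "smult f g = (\<lambda>w. \<Sum>j\<le>length w. f (take j w) * g (drop j w))"

definition sbr :: "'k::field_char_0 ser \<Rightarrow> 'k ser \<Rightarrow> 'k ser" where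
  "sbr f g = (\<lambda>w. smult f g w - smult g f w)"

inductive_set lie_poly :: "nat \<Rightarrow> 'k::field_char_0 ser set" for n :: nat where
  lp_zero: "zser \<in> lie_poly n"
| lp_gen: "i < n \<Longrightarrow> X i \<in> lie_poly n"
| lp_add: "f \<in> lie_poly n \<Longrightarrow> g \<in> lie_poly n \<Longrightarrow> (\<lambda>w. f w + g w) \<in> lie_poly n"
| lp_scale: "f \<in> lie_poly n \<Longrightarrow> (\<lambda>w. c * f w) \<in> lie_poly n"
| lp_br: "f \<in> lie_poly n \<Longrightarrow> g \<in> lie_poly n \<Longrightarrow> sbr f g \<in> lie_poly n"

definition hom :: "nat \<Rightarrow> 'k::field_char_0 ser \<Rightarrow> 'k ser" where
  "hom d f = (\<lambda>w. if length w = d then f w else 0)"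

text \<open>Elements of the degree completion lie_n: every homogeneous component is a Lie polynomial.\<close>
definition lie_ser :: "nat \<Rightarrow> 'k::field_char_0 ser \<Rightarrow> bool" where
  "lie_ser n f \<longleftrightarrow> (\<forall>d. hom d f \<in> lie_poly n)"

text \<open>Tangential derivations: a tuple (a_0,...,a_{n-1}) encoded as a function nat => series.\<close>
definition tder :: "nat \<Rightarrow> (nat \<Rightarrow> 'k::field_char_0 ser) \<Rightarrow> bool" where
  "tder n a \<longleftrightarrow> (\<forall>i<n. lie_ser n (a i) \<and> a i [i] = 0) \<and> (\<forall>i\<ge>n. a i = zser)"

text \<open>The (continuous) derivation with x_i |-> [x_i, a_i], acting on series:
  coefficient of v in u(f) is the sum over factorisations v = p m s (m nonempty).\<close>
definition der :: "(nat \<Rightarrow> 'k::field_char_0 ser) \<Rightarrow> 'k ser \<Rightarrow> 'k ser" where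
  "der a f = (\<lambda>v. \<Sum>i\<le>length v. \<Sum>j\<le>length v.
      if i < j then
        (let p = take i v; m = drop i (take j v); s = drop j v in
          f (p @ [hd m] @ s) * a (hd m) (tl m) - f (p @ [last m] @ s) * a (last m) (butlast m))
      else 0)"

text \<open>exp(u) acting as an automorphism (u raises degree, so the sum is finite in each degree).
  Group elements are these automorphisms; the group product is composition.\<close>
definition texp :: "(nat \<Rightarrow> 'k::field_char_0 ser) \<Rightarrow> 'k ser \<Rightarrow> 'k ser" where
  "texp a = (\<lambda>f v. \<Sum>k\<le>length v. (der a ^^ k) f v / fact k)"

definition sder :: "nat \<Rightarrow> (nat \<Rightarrow> 'k::field_char_0 ser) \<Rightarrow> bool" where
  "sder n a \<longleftrightarrow> tder n a \<and> der a (\<lambda>w. \<Sum>i<n. X i w) = zser"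

text \<open>Tr: projection to cyclic words; represented as the function giving, for each word,
  the sum of coefficients over its rotation class.\<close>
definition cyc :: "nat list \<Rightarrow> nat list set" where
  "cyc w = {rotate j w | j. j < length w}"

definition Tr :: "'k::field_char_0 ser \<Rightarrow> nat list \<Rightarrow> 'k" where
  "Tr f = (\<lambda>w. \<Sum>w'\<in>cyc w. f w')"

text \<open>div(u) = sum_k Tr(x_k d_k a_k), with a = a_0 + sum_k (d_k a) x_k, i.e. (d_k a)(w) = a(w @ [k]).\<close>
definition tdiv :: "nat \<Rightarrow> (nat \<Rightarrow> 'k::field_char_0 ser) \<Rightarrow> nat list \<Rightarrow> 'k" where
  "tdiv n a = Tr (\<lambda>w. \<Sum>k<n. (case w of [] \<Rightarrow> 0 | l # w' \<Rightarrow> if l = k then a k (w' @ [k]) else 0))"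

definition kv :: "nat \<Rightarrow> (nat \<Rightarrow> 'k::field_char_0 ser) \<Rightarrow> bool" where
  "kv n a \<longleftrightarrow> sder n a \<and> tdiv n a = (\<lambda>w. 0)"

text \<open>Linear substitution x_i |-> sum of x_j over j with c j = Some i.\<close>
definition relabel :: "(nat \<Rightarrow> nat option) \<Rightarrow> 'k::field_char_0 ser \<Rightarrow> 'k ser" where
  "relabel c f = (\<lambda>v. if (\<forall>l\<in>set v. c l \<noteq> None) then f (map (the \<circ> c) v) else 0)"

definition cabl :: "(nat \<Rightarrow> nat option) \<Rightarrow> (nat \<Rightarrow> 'k::field_char_0 ser) \<Rightarrow> nat \<Rightarrow> 'k ser" where
  "cabl c a = (\<lambda>j. case c j of None \<Rightarrow> zser | Some k \<Rightarrow> relabel c (a k))"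

text \<open>u^{i1,i2,i3} (0-based indices).\<close>
definition perm3 :: "nat \<Rightarrow> nat \<Rightarrow> nat \<Rightarrow> (nat \<Rightarrow> 'k::field_char_0 ser) \<Rightarrow> nat \<Rightarrow> 'k ser" where
  "perm3 i1 i2 i3 = cabl (\<lambda>l. if l = i1 then Some 0 else if l = i2 then Some 1
                              else if l = i3 then Some 2 else None)"

definition c_1_2_3 :: "nat \<Rightarrow> nat option" where
  "c_1_2_3 l = (if l < 3 then Some l else None)"
definition c_2_3_4 :: "nat \<Rightarrow> nat option" where
  "c_2_3_4 l = (if 1 \<le> l \<and> l < 4 then Some (l - 1) else None)"
definition c_12_3_4 :: "nat \<Rightarrow> nat option" where
  "c_12_3_4 l = (if l = 0 \<or> l = 1 then Some 0 else if l = 2 then Some 1 else if l = 3 then Some 2 else None)"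
definition c_1_23_4 :: "nat \<Rightarrow> nat option" where
  "c_1_23_4 l = (if l = 0 then Some 0 else if l = 1 \<or> l = 2 then Some 1 else if l = 3 then Some 2 else None)"
definition c_1_2_34 :: "nat \<Rightarrow> nat option" where
  "c_1_2_34 l = (if l = 0 then Some 0 else if l = 1 then Some 1 else if l = 2 \<or> l = 3 then Some 2 else None)"

definition tadd :: "(nat \<Rightarrow> 'k::field_char_0 ser) \<Rightarrow> (nat \<Rightarrow> 'k ser) \<Rightarrow> nat \<Rightarrow> 'k ser" where
  "tadd a b = (\<lambda>i w. a i w + b i w)"
definition tscale :: "'k::field_char_0 \<Rightarrow> (nat \<Rightarrow> 'k ser) \<Rightarrow> nat \<Rightarrow> 'k ser" where
  "tscale c a = (\<lambda>i w. c * a i w)"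

definition t12 :: "nat \<Rightarrow> 'k::field_char_0 ser" where
  "t12 = (\<lambda>i. if i = 0 then X 1 else if i = 1 then X 0 else zser)"
definition t13 :: "nat \<Rightarrow> 'k::field_char_0 ser" where
  "t13 = (\<lambda>i. if i = 0 then X 2 else if i = 2 then X 0 else zser)"
definition t23 :: "nat \<Rightarrow> 'k::field_char_0 ser" where
  "t23 = (\<lambda>i. if i = 1 then X 2 else if i = 2 then X 1 else zser)"

text \<open>pi(phi_2) = alpha + beta + gamma, where phi_2 = (alpha[y,z], beta[z,x], gamma[x,y]):
  alpha is the coefficient of yz in the first component, etc.\<close>
definition pi2 :: "(nat \<Rightarrow> 'k::field_char_0 ser) \<Rightarrow> 'k" where
  "pi2 a = a 0 [1,2] + a 1 [2,0] + a 2 [0,1]"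

end

theory Submission imports Defs begin

text \<open>Everything happens in degree at most three. The special-derivation and Lie conditions
  make the quadratic part of \<open>\<phi>\<close> a single cyclic antisymmetric tensor, so
  \<open>\<pi>(\<phi>\<^sub>2) = 3 \<phi>\<^sub>0[y,z]\<close>; inversion and the pentagon kill the linear part. Applying both sides
  of the second hexagon to \<open>z\<close> and reading off the coefficient
  of \<open>xyz\<close> gives \<open>-1/8\<close> on the left, while on the right each \<open>\<Phi>\<close>-factor contributes one
  quadratic coefficient, and these add up to \<open>-3 \<phi>\<^sub>0[y,z]\<close>.\<close>

subsection \<open>Coefficients of \<open>der\<close> and \<open>texp\<close> in low degree\<close>

lemma der_singleton: "der a g [x] = 0"
  by (simp add: der_def atMost_Suc)

lemma der_pair: "der a g [x,y] = g [x] * a x [y] - g [y] * a y [x]"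
  by (simp add: der_def atMost_Suc numeral_2_eq_2 Let_def)

lemma der_triple:
  "der a g [x,y,z] = g [x,z] * a x [y] - g [y,z] * a y [x] + g [x] * a x [y,z] - g [z] * a z [x,y]
     + g [x,y] * a y [z] - g [x,z] * a z [y]"
  by (simp add: der_def atMost_Suc numeral_3_eq_3 Let_def algebra_simps)

lemma texp_singleton: "texp a g [x] = g [x]"
  by (simp add: texp_def der_singleton)

lemma texp_pair: "texp a g [x,y] = g [x,y] + (g [x] * a x [y] - g [y] * a y [x])"
  by (simp add: texp_def atMost_Suc numeral_2_eq_2 der_singleton der_pair)

lemma texp_triple: "texp a g [x,y,z] = g [x,y,z] + der a g [x,y,z] + der a (der a g) [x,y,z] / 2"
  by (simp add: texp_def atMost_Suc numeral_3_eq_3 der_singleton der_pair der_triple numeral_2_eq_2)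

lemma texp_pair_no_linear:
  assumes "\<And>i j. a i [j] = 0"
  shows "texp a g [x,y] = g [x,y]"
  by (simp add: texp_pair assms)

lemma texp_triple_no_linear:
  assumes "\<And>i j. a i [j] = 0"
  shows "texp a g [x,y,z] = g [x,y,z] + g [x] * a x [y,z] - g [z] * a z [x,y]"
  by (simp add: texp_triple der_triple der_pair der_singleton assms)

subsection \<open>Invertibility of \<open>texp\<close>\<close>

lemma der_local:
  assumes a0: "\<And>i. a i [] = 0" and eq: "\<And>w. length w < length v \<Longrightarrow> g w = g' w"
  shows "der a g v = der a g' v"
  unfolding der_def
proof (intro sum.cong refl)
  fix i j assume i: "i \<in> {..length v}" and j: "j \<in> {..length v}"
  show "(if i < j then let p = take i v; m = drop i (take j v); s = drop j v in
          g (p @ [hd m] @ s) * a (hd m) (tl m) - g (p @ [last m] @ s) * a (last m) (butlast m) else 0) =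
        (if i < j then let p = take i v; m = drop i (take j v); s = drop j v in
          g' (p @ [hd m] @ s) * a (hd m) (tl m) - g' (p @ [last m] @ s) * a (last m) (butlast m) else 0)"
  proof (cases "i < j")
    case False then show ?thesis by simp
  next
    case True
    define m where "m = drop i (take j v)"
    have lm: "length m = j - i" using i j True by (simp add: m_def)
    show ?thesis
    proof (cases "j = Suc i")
      case True
      then have "length m = 1" using lm by simp
      then obtain c where "m = [c]" by (metis One_nat_def length_0_conv length_Suc_conv)
      then show ?thesis using a0 by (simp add: m_def[symmetric] Let_def)
    next
      case False
      then have "length (take i v @ [x] @ drop j v) < length v" for x
        using \<open>i < j\<close> i j by auto
      then show ?thesis using eq by (simp add: m_def[symmetric] Let_def)
    qed
  qed
qed

lemma der_pow_local:
  assumes "\<And>i. a i [] = 0" and "\<And>w. length w < n \<Longrightarrow> g w = g' w" and "length w < n"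
  shows "(der a ^^ k) g w = (der a ^^ k) g' w"
  using assms(3)
proof (induction k arbitrary: w)
  case 0 then show ?case using assms(2) by simp
next
  case (Suc k)
  have "der a ((der a ^^ k) g) w = der a ((der a ^^ k) g') w"
    by (rule der_local) (use assms(1) Suc in auto)
  then show ?case by simp
qed

text \<open>The preimage of \<open>h\<close> under \<open>texp a\<close> is built degree by degree: \<open>texp_approx a h n\<close> is
  correct on words of length below \<open>n\<close>, and the next degree is solved for using that
  \<open>der a\<close> strictly raises degree.\<close>

primrec texp_approx :: "(nat \<Rightarrow> 'k::field_char_0 ser) \<Rightarrow> 'k ser \<Rightarrow> nat \<Rightarrow> 'k ser" where
  "texp_approx a h 0 = (\<lambda>w. 0)"
| "texp_approx a h (Suc n) = (\<lambda>w. if length w < n then texp_approx a h n w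
      else h w - (\<Sum>k<length w. (der a ^^ Suc k) (texp_approx a h n) w / fact (Suc k)))"

definition texp_preimage :: "(nat \<Rightarrow> 'k::field_char_0 ser) \<Rightarrow> 'k ser \<Rightarrow> 'k ser" where
  "texp_preimage a h = (\<lambda>w. texp_approx a h (Suc (length w)) w)"

lemma texp_approx_stable: "length w < n \<Longrightarrow> texp_approx a h n w = texp_preimage a h w"
proof (induction n arbitrary: w)
  case 0 then show ?case by simp
next
  case (Suc n)
  show ?case
  proof (cases "length w < n")
    case True then show ?thesis using Suc.IH by simp
  next
    case False
    then have "length w = n" using Suc.prems by simp
    then show ?thesis by (simp add: texp_preimage_def)
  qed
qed

lemma texp_texp_preimage:
  assumes a0: "\<And>i. a i [] = 0"
  shows "texp a (texp_preimage a h) = h"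
proof
  fix w
  have "(der a ^^ Suc k) (texp_preimage a h) w = (der a ^^ Suc k) (texp_approx a h (length w)) w" for k
  proof -
    have "der a ((der a ^^ k) (texp_preimage a h)) w = der a ((der a ^^ k) (texp_approx a h (length w))) w"
      by (intro der_local der_pow_local a0) (simp_all add: texp_approx_stable)
    then show ?thesis by simp
  qed
  moreover have "texp a g w = g w + (\<Sum>k<length w. (der a ^^ Suc k) g w / fact (Suc k))" for g
    unfolding texp_def by (simp add: sum.atMost_shift)
  ultimately show "texp a (texp_preimage a h) w = h w"
    by (simp add: texp_preimage_def)
qed

lemma texp_inv_apply: "(\<And>i. a i [] = 0) \<Longrightarrow> texp a (inv (texp a) h) = h"
  by (metis surjI surj_f_inv_f texp_texp_preimage)

lemma inv_texp_singleton:
  assumes "\<And>i. a i [] = 0"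
  shows "inv (texp a) g [x] = g [x]"
  using texp_singleton[of a "inv (texp a) g" x] by (simp add: texp_inv_apply assms)

lemma inv_texp_pair_no_linear:
  assumes "\<And>i. a i [] = 0" and "\<And>i j. a i [j] = 0"
  shows "inv (texp a) g [x,y] = g [x,y]"
  using texp_pair_no_linear[of a "inv (texp a) g" x y] by (simp add: texp_inv_apply assms)

lemma inv_texp_triple_no_linear:
  assumes "\<And>i. a i [] = 0" and "\<And>i j. a i [j] = 0"
  shows "inv (texp a) g [x,y,z] = g [x,y,z] - g [x] * a x [y,z] + g [z] * a z [x,y]"
proof -
  have "g [x,y,z] = texp a (inv (texp a) g) [x,y,z]"
    by (simp add: texp_inv_apply assms(1))
  also have "\<dots> = inv (texp a) g [x,y,z] + g [x] * a x [y,z] - g [z] * a z [x,y]"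
    by (simp add: texp_triple_no_linear assms inv_texp_singleton)
  finally show ?thesis by (simp add: algebra_simps)
qed

subsection \<open>Low-degree part of a Kashiwara--Vergne derivation\<close>

lemma lie_poly_low_degree:
  "f \<in> lie_poly n \<Longrightarrow> f [] = 0 \<and> (\<forall>y z. f [y,z] + f [z,y] = 0)"
proof (induction rule: lie_poly.induct)
  case lp_zero then show ?case by (simp add: zser_def)
next
  case (lp_gen i) then show ?case by (simp add: X_def)
next
  case (lp_add f g)
  then have "\<forall>y z. (f [y,z] + f [z,y]) + (g [y,z] + g [z,y]) = 0" by simp
  then show ?case using lp_add.IH by (simp add: algebra_simps)
next
  case (lp_scale f c) then show ?case by (simp add: distrib_left[symmetric])
next
  case (lp_br f g)
  have smult_Nil: "smult f g [] = f [] * g []" for f g :: "'a ser"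
    by (simp add: smult_def)
  have smult_pair: "smult f g [y,z] = f [] * g [y,z] + f [y] * g [z] + f [y,z] * g []"
    for f g :: "'a ser" and y z
    by (simp add: smult_def atMost_Suc numeral_2_eq_2)
  show ?case using lp_br.IH by (simp add: sbr_def smult_Nil smult_pair)
qed

lemma lie_ser_Nil:
  assumes "lie_ser n f"
  shows "f [] = 0"
proof -
  have "hom 0 f \<in> lie_poly n" using assms by (simp add: lie_ser_def)
  from lie_poly_low_degree[OF this] show ?thesis by (simp add: hom_def)
qed

lemma lie_ser_pair_antisym: "lie_ser n f \<Longrightarrow> f [y,z] = - f [z,y]"
  using lie_poly_low_degree[of "hom 2 f" n] by (simp add: lie_ser_def hom_def eq_neg_iff_add_eq_0)

lemma sum_X_singleton: "(\<Sum>i<n. X i [x]) = (if x < n then 1 else 0 :: 'k::field_char_0)"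
  by (simp add: X_def)

lemma sum_X_pair: "(\<Sum>i<n. X i [x,y]) = (0 :: 'k::field_char_0)"
  by (simp add: X_def)

lemma sder_linear_symmetric:
  assumes "sder n a" and "x < n" and "y < n"
  shows "a x [y] = a y [x]"
proof -
  have "der a (\<lambda>w. \<Sum>i<n. X i w) [x,y] = 0" using assms(1) by (simp add: sder_def zser_def)
  then show ?thesis using assms(2,3) by (simp add: der_pair sum_X_singleton)
qed

lemma sder_pair_cyclic:
  assumes "sder n a" and "x < n" and "z < n"
  shows "a x [y,z] = a z [x,y]"
proof -
  have "der a (\<lambda>w. \<Sum>i<n. X i w) [x,y,z] = 0" using assms(1) by (simp add: sder_def zser_def)
  then show ?thesis using assms(2,3) by (simp add: der_triple sum_X_singleton sum_X_pair)
qed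

lemma kv_Nil: "kv n a \<Longrightarrow> a i [] = 0"
  by (cases "i < n") (auto simp: kv_def sder_def tder_def zser_def intro: lie_ser_Nil)

lemma kv_pair_antisym: "kv n a \<Longrightarrow> a i [y,z] = - a i [z,y]"
  by (cases "i < n") (auto simp: kv_def sder_def tder_def zser_def intro: lie_ser_pair_antisym)

lemma kv3_pi2:
  assumes "kv 3 a"
  shows "pi2 a = 3 * a 0 [1,2]"
proof -
  have sder: "sder 3 a" using assms by (simp add: kv_def)
  show ?thesis
    using sder_pair_cyclic[OF sder, where x=0 and y=1 and z=2]
      sder_pair_cyclic[OF sder, where x=1 and y=2 and z=0]
    by (simp add: pi2_def)
qed

text \<open>The linear parts of \<open>\<Phi>\<^sup>1\<^sup>,\<^sup>2\<^sup>,\<^sup>3\<close> and \<open>\<Phi>\<^sup>3\<^sup>,\<^sup>2\<^sup>,\<^sup>1\<close> add up, since the composition is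
  the identity in degree two.\<close>

lemma inversion_linear:
  assumes "texp (perm3 0 1 2 a) \<circ> texp (perm3 2 1 0 a) = id"
  shows "a 0 [1] + a 2 [1] = 0" "a 0 [2] + a 2 [0] = 0" "a 1 [0] + a 1 [2] = 0"
proof -
  have "texp (perm3 0 1 2 a) (texp (perm3 2 1 0 a) (X x)) [x,y] = X x [x,y]" for x y
    using fun_cong[OF assms, of "X x"] by simp
  from this[of 0 1] this[of 0 2] this[of 1 0] show
    "a 0 [1] + a 2 [1] = 0" "a 0 [2] + a 2 [0] = 0" "a 1 [0] + a 1 [2] = 0"
    by (simp_all add: texp_pair texp_singleton X_def perm3_def cabl_def relabel_def algebra_simps)
qed

text \<open>Likewise in degree two the pentagon only sees the sum of the linear parts of its factors.\<close>

lemma pentagon_linear: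
  assumes "tder 3 a"
    and "texp (cabl c_12_3_4 a) \<circ> texp (cabl c_1_2_34 a)
       = texp (cabl c_1_2_3 a) \<circ> texp (cabl c_1_23_4 a) \<circ> texp (cabl c_2_3_4 a)"
  shows "a 0 [1] = 0"
proof -
  have "(texp (cabl c_12_3_4 a) \<circ> texp (cabl c_1_2_34 a)) (X 0) [0,1]
      = (texp (cabl c_1_2_3 a) \<circ> texp (cabl c_1_23_4 a) \<circ> texp (cabl c_2_3_4 a)) (X 0) [0,1]"
    using assms(2) by simp
  moreover have "a 0 [0] = 0" "a 1 [1] = 0" using assms(1) by (simp_all add: tder_def)
  ultimately show ?thesis
    by (simp add: texp_pair texp_singleton X_def cabl_def relabel_def c_12_3_4_def c_1_2_34_def
        c_1_2_3_def c_1_23_4_def c_2_3_4_def zser_def)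
qed

lemma kv3_linear_part_zero:
  assumes kv3: "kv 3 a"
    and pentagon: "texp (cabl c_12_3_4 a) \<circ> texp (cabl c_1_2_34 a)
       = texp (cabl c_1_2_3 a) \<circ> texp (cabl c_1_23_4 a) \<circ> texp (cabl c_2_3_4 a)"
    and inversion: "texp (perm3 0 1 2 a) \<circ> texp (perm3 2 1 0 a) = id"
    and "i < 3" and "l < 3"
  shows "a i [l] = 0"
proof -
  have tder: "tder 3 a" and sder: "sder 3 a" using kv3 by (simp_all add: kv_def sder_def)
  have diag: "a 0 [0] = 0" "a 1 [1] = 0" "a 2 [2] = 0" using tder by (simp_all add: tder_def)
  have sym: "a 1 [0] = a 0 [1]" "a 2 [0] = a 0 [2]" "a 2 [1] = a 1 [2]"
    using sder_linear_symmetric[OF sder] by simp_all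
  have "a 0 [1] = 0" by (rule pentagon_linear[OF tder pentagon])
  then have off_diag: "a 0 [1] = 0" "a 0 [2] = 0" "a 1 [2] = 0"
    using inversion_linear[OF inversion] sym by simp_all
  have "i = 0 \<or> i = 1 \<or> i = 2" "l = 0 \<or> l = 1 \<or> l = 2" using assms(4,5) by auto
  then show ?thesis using diag sym off_diag by (elim disjE) simp_all
qed

subsection \<open>The second hexagon in degree three\<close>

lemma texp_half_t12_coeff_012:
  "texp (tscale (1/2) t12) g [0,1,2] = g [0,1,2] + (g [0,2] - g [1,2]) / 2"
  by (simp add: texp_triple der_triple der_pair tscale_def t12_def X_def zser_def)

lemma texp_half_t13_coeff_012: "texp (tscale (1/2) t13) g [0,1,2] = g [0,1,2]"
  by (simp add: texp_triple der_triple der_pair tscale_def t13_def X_def zser_def)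

lemma texp_half_t12_t13_X2_coeff_012:
  "texp (tscale (1/2) (tadd t12 t13)) (X 2 :: 'k::field_char_0 ser) [0,1,2] = - 1/8"
  by (simp add: texp_triple der_triple der_pair X_def tscale_def tadd_def t12_def t13_def zser_def)

lemma perm3_Nil: "(\<And>i. a i [] = 0) \<Longrightarrow> perm3 i1 i2 i3 a j [] = 0"
  by (simp add: perm3_def cabl_def relabel_def zser_def split: option.split)

lemma perm3_singleton:
  assumes "\<And>i l. i < 3 \<Longrightarrow> l < 3 \<Longrightarrow> a i [l] = 0"
  shows "perm3 i1 i2 i3 a j [l] = 0"
  by (simp add: perm3_def cabl_def relabel_def zser_def assms split: option.split)

lemma hexagon2_rhs_X2_coeff_012:
  assumes const: "\<And>i. a i [] = 0" and lin: "\<And>i l. i < 3 \<Longrightarrow> l < 3 \<Longrightarrow> a i [l] = 0"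
  shows "(inv (texp (perm3 0 2 1 a)) \<circ> texp (tscale (1/2) t13) \<circ> texp (perm3 2 0 1 a)
          \<circ> texp (tscale (1/2) t12) \<circ> inv (texp (perm3 2 1 0 a))) (X 2) [0,1,2]
         = a 0 [2,1] - a 0 [1,2] + a 1 [0,2]"
proof -
  let ?p = "\<lambda>i1 i2 i3. perm3 i1 i2 i3 a"
  have p_const: "?p i1 i2 i3 j [] = 0" for i1 i2 i3 j
    by (rule perm3_Nil) (rule const)
  have p_lin: "?p i1 i2 i3 j [l] = 0" for i1 i2 i3 j l
    by (rule perm3_singleton) (rule lin)
  have texp_p: "texp (?p i1 i2 i3) f [x,y,z]
      = f [x,y,z] + f [x] * ?p i1 i2 i3 x [y,z] - f [z] * ?p i1 i2 i3 z [x,y]" for i1 i2 i3 f x y z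
    by (rule texp_triple_no_linear) (rule p_lin)
  have inv_texp_p: "inv (texp (?p i1 i2 i3)) f [x,y,z]
      = f [x,y,z] - f [x] * ?p i1 i2 i3 x [y,z] + f [z] * ?p i1 i2 i3 z [x,y]" for i1 i2 i3 f x y z
    by (rule inv_texp_triple_no_linear) (rule p_const, rule p_lin)
  note perm3_eval = perm3_def cabl_def relabel_def
  define g where "g = inv (texp (perm3 2 1 0 a)) (X 2)"
  have g_lin: "g [l] = X 2 [l]" for l
    by (simp add: g_def inv_texp_singleton p_const)
  have g_quad: "g [x,y] = 0" for x y
    by (simp add: g_def inv_texp_pair_no_linear p_const p_lin X_def)
  have g_cubic: "g [0,1,2] = a 0 [2,1]"
    unfolding g_def inv_texp_p by (simp add: X_def perm3_eval)
  have "texp (perm3 2 0 1 a) (texp (tscale (1/2) t12) g) [0,1,2] = a 0 [2,1] - a 0 [1,2]"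
    unfolding texp_p texp_singleton texp_half_t12_coeff_012 g_cubic
    by (simp add: g_lin g_quad X_def perm3_eval)
  then show ?thesis
    unfolding comp_apply g_def[symmetric] inv_texp_p texp_singleton texp_half_t13_coeff_012
    by (simp add: g_lin X_def perm3_eval)
qed

theorem proposition9p2:
  fixes \<phi> :: "nat \<Rightarrow> 'k::field_char_0 ser"
  assumes kv3: "kv 3 \<phi>"
    and pentagon: "texp (cabl c_12_3_4 \<phi>) \<circ> texp (cabl c_1_2_34 \<phi>)
                 = texp (cabl c_1_2_3 \<phi>) \<circ> texp (cabl c_1_23_4 \<phi>) \<circ> texp (cabl c_2_3_4 \<phi>)"
    and inversion: "texp (perm3 0 1 2 \<phi>) \<circ> texp (perm3 2 1 0 \<phi>) = id"
    and hex1: "texp (tscale (1/2) (tadd t13 t23))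
             = texp (perm3 1 0 2 \<phi>) \<circ> texp (tscale (1/2) t13) \<circ> inv (texp (perm3 1 2 0 \<phi>))
               \<circ> texp (tscale (1/2) t23) \<circ> texp (perm3 2 1 0 \<phi>)"
    and hex2: "texp (tscale (1/2) (tadd t12 t13))
             = inv (texp (perm3 0 2 1 \<phi>)) \<circ> texp (tscale (1/2) t13) \<circ> texp (perm3 2 0 1 \<phi>)
               \<circ> texp (tscale (1/2) t12) \<circ> inv (texp (perm3 2 1 0 \<phi>))"
  shows "pi2 \<phi> = 1/8"
proof -
  have sder: "sder 3 \<phi>" using kv3 by (simp add: kv_def)
  have lin: "\<phi> i [l] = 0" if "i < 3" "l < 3" for i l
    using kv3_linear_part_zero[OF kv3 pentagon inversion that] .
  have "- 1/8 = texp (tscale (1/2) (tadd t12 t13)) (X 2) [0,1,2]"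
    by (rule texp_half_t12_t13_X2_coeff_012[symmetric])
  also have "\<dots> = (inv (texp (perm3 0 2 1 \<phi>)) \<circ> texp (tscale (1/2) t13) \<circ> texp (perm3 2 0 1 \<phi>)
                    \<circ> texp (tscale (1/2) t12) \<circ> inv (texp (perm3 2 1 0 \<phi>))) (X 2) [0,1,2]"
    by (simp only: hex2)
  also have "\<dots> = \<phi> 0 [2,1] - \<phi> 0 [1,2] + \<phi> 1 [0,2]"
    by (rule hexagon2_rhs_X2_coeff_012[OF kv_Nil[OF kv3] lin])
  also have "\<dots> = - 3 * \<phi> 0 [1,2]"
    using kv_pair_antisym[OF kv3, of 0 2 1] kv_pair_antisym[OF kv3, of 1 0 2]
      sder_pair_cyclic[OF sder, where x=1 and y=2 and z=0]
    by simp
  finally show ?thesis using kv3_pi2[OF kv3] by simp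
qed

end
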